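(* Let $\lambda_2<0$, $C_1,C_2\in\mathbb{R}$, and $q(t)=C_1t+\frac{C_2}{\lambda_2}\big(e^{\lambda_2 t}-1\big)+1$. Then $q$ vanishes at some $t>0$ if and only if one of the following holds: (1) $C_1<0$; (2) $C_1=0$, $C_2<\lambda_2$; (3) $C_1>0$, $C_2<0$, $C_1+C_2<0$ and $\lambda_2+C_1\ln\!\left(-\tfrac{C_1}{C_2}\right)\ge C_1+C_2$.
   Context: This $q$ is the decisive function of the extended system $\dot{\mathbf v}=-v_1\mathbf v+Q\mathbf v$ when $Q$ is diagonalizable with eigenvalues $\lambda_1=0>\lambda_2$ (with $C_1=\frac{a_{22}}{\det A}(a_{11}v_1(0)+a_{12}v_2(0))$, $C_2=-\frac{a_{12}}{\det A}(a_{21}v_1(0)+a_{22}v_2(0))$, $AQA^{-1}=\mathrm{diag}(\lambda_1,\lambda_2)$); finite-time blow-up of the extended system is equivalent to $q$ vanishing at some $t>0$. *)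

theory Defs
  imports Complex_Main
begin

definition decisive_q :: "real \<Rightarrow> real \<Rightarrow> real \<Rightarrow> real \<Rightarrow> real" where
  "decisive_q lam2 C1 C2 t = C1 * t + (C2 / lam2) * (exp (lam2 * t) - 1) + 1"

end

theory Submission
  imports Defs
begin

text \<open>Since q 0 = 1 and q is continuous, q has a positive root iff it is nonpositive somewhere
on (0, \<infinity>). For C1 < 0 the linear term drives q to -\<infinity>. For C1 \<ge> 0 and C2 \<ge> lam2 the
exponential term is too small to compensate the constant 1. Otherwise q is convex
(C2 / lam2 > 0), so it lies above each of its tangents: for C1 + C2 \<ge> 0 the tangent at 0
already stays above 1, and for C1 + C2 < 0 q attains its minimum at the positive critical point
exp (lam2 t) = - C1 / C2, where its value is
(lam2 + C1 ln (- C1 / C2) - C1 - C2) / lam2.\<close>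

lemma decisive_q_0 [simp]: "decisive_q lam2 C1 C2 0 = 1"
  by (simp add: decisive_q_def)

lemma continuous_on_decisive_q: "continuous_on S (decisive_q lam2 C1 C2)"
  unfolding decisive_q_def by (intro continuous_intros)

lemma decisive_q_root_if_nonpos:
  assumes "T > 0" "decisive_q lam2 C1 C2 T \<le> 0"
  shows "\<exists>t>0. decisive_q lam2 C1 C2 t = 0"
proof -
  obtain t where "0 \<le> t" "t \<le> T" "decisive_q lam2 C1 C2 t = 0"
    using IVT2'[of "decisive_q lam2 C1 C2" T 0 0] assms continuous_on_decisive_q by auto
  moreover have "t \<noteq> 0"
    using calculation by auto
  ultimately show ?thesis
    by (intro exI[of _ t]) simp
qed

lemma decisive_q_above_tangent:
  fixes lam2 C1 C2 s t :: real
  assumes "lam2 \<noteq> 0" "C2 / lam2 \<ge> 0"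
  shows "decisive_q lam2 C1 C2 s + (C1 + C2 * exp (lam2 * s)) * (t - s)
           \<le> decisive_q lam2 C1 C2 t"
proof -
  have "exp (lam2 * s) * (1 + lam2 * (t - s)) \<le> exp (lam2 * s) * exp (lam2 * (t - s))"
    by (intro mult_left_mono exp_ge_add_one_self) simp
  also have "\<dots> = exp (lam2 * t)"
    by (simp flip: exp_add add: algebra_simps)
  finally have "C2 / lam2 * (exp (lam2 * s) * (1 + lam2 * (t - s))) \<le> C2 / lam2 * exp (lam2 * t)"
    using assms(2) by (rule mult_left_mono)
  then show ?thesis
    using assms(1) by (simp add: decisive_q_def algebra_simps)
qed

lemma decisive_q_pos:
  fixes lam2 C1 C2 t :: real
  assumes "lam2 < 0" "C1 \<ge> 0" "C2 / lam2 \<le> 1" "t \<ge> 0"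
  shows "decisive_q lam2 C1 C2 t > 0"
proof -
  have "exp (lam2 * t) \<le> 1"
    using assms(1,4) by (simp add: mult_nonpos_nonneg)
  then have "C2 / lam2 * (1 - exp (lam2 * t)) \<le> 1 - exp (lam2 * t)"
    using mult_right_mono[OF assms(3), of "1 - exp (lam2 * t)"] by simp
  then have "C2 / lam2 * (1 - exp (lam2 * t)) < 1"
    using exp_gt_zero[of "lam2 * t"] by linarith
  moreover have "C1 * t \<ge> 0"
    using assms(2,4) by simp
  ultimately show ?thesis
    by (simp add: decisive_q_def algebra_simps)
qed

lemma decisive_q_at_critical_point:
  fixes lam2 C1 C2 :: real
  assumes "lam2 \<noteq> 0" "- C1 / C2 > 0"
  defines "ts \<equiv> ln (- C1 / C2) / lam2"
  shows "C1 + C2 * exp (lam2 * ts) = 0"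
    and "decisive_q lam2 C1 C2 ts = (lam2 + C1 * ln (- C1 / C2) - C1 - C2) / lam2"
proof -
  have "C2 \<noteq> 0"
    using assms(2) by auto
  have exp_ts: "exp (lam2 * ts) = - C1 / C2"
    using assms by (simp add: ts_def)
  show "C1 + C2 * exp (lam2 * ts) = 0"
    using \<open>C2 \<noteq> 0\<close> by (simp add: exp_ts)
  show "decisive_q lam2 C1 C2 ts = (lam2 + C1 * ln (- C1 / C2) - C1 - C2) / lam2"
    using assms(1) \<open>C2 \<noteq> 0\<close> unfolding decisive_q_def exp_ts
    by (simp add: ts_def field_simps)
qed

lemma decisive_q_root_if_neg_slope:
  fixes lam2 C1 C2 :: real
  assumes "lam2 < 0" "C1 < 0"
  shows "\<exists>t>0. decisive_q lam2 C1 C2 t = 0"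
proof (rule decisive_q_root_if_nonpos)
  define T where "T = (\<bar>C2 / lam2\<bar> + 1) / - C1"
  show "T > 0"
    using assms(2) by (simp add: T_def divide_pos_neg add_nonneg_pos)
  have "exp (lam2 * T) < 1"
    using assms(1) \<open>T > 0\<close> by (simp add: mult_neg_pos)
  then have "\<bar>exp (lam2 * T) - 1\<bar> \<le> 1"
    using exp_gt_zero[of "lam2 * T"] by linarith
  then have "C2 / lam2 * (exp (lam2 * T) - 1) \<le> \<bar>C2 / lam2\<bar>"
    by (metis abs_ge_self abs_mult mult.right_neutral mult_left_mono abs_ge_zero order_trans)
  moreover have "C1 * T = - (\<bar>C2 / lam2\<bar> + 1)"
    using assms(2) by (simp add: T_def)
  ultimately show "decisive_q lam2 C1 C2 T \<le> 0"
    by (simp add: decisive_q_def)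
qed

lemma decisive_q_root_iff_zero_slope:
  fixes lam2 C2 :: real
  assumes "lam2 < 0"
  shows "(\<exists>t>0. decisive_q lam2 0 C2 t = 0) \<longleftrightarrow> C2 < lam2"
proof
  assume "\<exists>t>0. decisive_q lam2 0 C2 t = 0"
  then obtain t where "t > 0" "decisive_q lam2 0 C2 t = 0"
    by blast
  moreover have "C2 / lam2 \<le> 1" if "\<not> C2 < lam2"
    using that assms by (simp add: divide_le_eq)
  ultimately show "C2 < lam2"
    using decisive_q_pos[OF assms order_refl, of C2 t] by (cases "C2 < lam2") auto
next
  assume "C2 < lam2"
  define r where "r = 1 - lam2 / C2"
  have "0 < lam2 / C2" "lam2 / C2 < 1"
    using assms \<open>C2 < lam2\<close> by (simp_all add: divide_neg_neg divide_less_eq)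
  then have "0 < r" "r < 1"
    by (auto simp: r_def)
  define T where "T = ln r / lam2"
  have "T > 0"
    using assms \<open>0 < r\<close> \<open>r < 1\<close> by (simp add: T_def divide_neg_neg)
  moreover have "decisive_q lam2 0 C2 T = 0"
    using assms \<open>0 < r\<close> \<open>C2 < lam2\<close>
    by (simp add: decisive_q_def T_def r_def field_simps)
  ultimately show "\<exists>t>0. decisive_q lam2 0 C2 t = 0"
    by blast
qed

lemma decisive_q_root_iff_pos_slope:
  fixes lam2 C1 C2 :: real
  assumes "lam2 < 0" "C1 > 0"
  shows "(\<exists>t>0. decisive_q lam2 C1 C2 t = 0) \<longleftrightarrow>
           C2 < 0 \<and> C1 + C2 < 0 \<and> lam2 + C1 * ln (- C1 / C2) \<ge> C1 + C2"
proof (cases "C2 < 0 \<and> C1 + C2 < 0")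
  case False
  have "decisive_q lam2 C1 C2 t > 0" if "t > 0" for t
  proof (cases "C2 < 0")
    case True
    have "C2 / lam2 \<ge> 0"
      using True assms(1) by (simp add: divide_neg_neg less_imp_le)
    then have "1 + (C1 + C2) * t \<le> decisive_q lam2 C1 C2 t"
      using decisive_q_above_tangent[of lam2 C2 C1 0 t] assms(1) by simp
    moreover have "(C1 + C2) * t \<ge> 0"
      using False True \<open>t > 0\<close> by simp
    ultimately show ?thesis
      by linarith
  next
    case False
    then have "C2 / lam2 \<le> 1"
      using assms(1) by (simp add: divide_nonneg_neg order_trans)
    then show ?thesis
      using decisive_q_pos assms \<open>t > 0\<close> by simp
  qed
  then have "\<not> (\<exists>t>0. decisive_q lam2 C1 C2 t = 0)"
    by fastforce
  with False show ?thesis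
    by blast
next
  case True
  define r where "r = - C1 / C2"
  define ts where "ts = ln r / lam2"
  have "0 < r" "r < 1"
    using True assms(2) by (simp_all add: r_def divide_pos_neg less_divide_eq)
  then have "ts > 0"
    using assms(1) by (simp add: ts_def divide_neg_neg)
  have "C2 / lam2 \<ge> 0"
    using True assms(1) by (simp add: divide_neg_neg less_imp_le)
  then have ts_min: "decisive_q lam2 C1 C2 ts \<le> decisive_q lam2 C1 C2 t" for t
    using decisive_q_above_tangent[of lam2 C2 C1 ts t]
      decisive_q_at_critical_point(1)[of lam2 C1 C2] assms(1) \<open>0 < r\<close>
    by (simp add: r_def ts_def)
  have "(\<exists>t>0. decisive_q lam2 C1 C2 t = 0) \<longleftrightarrow> decisive_q lam2 C1 C2 ts \<le> 0"
  proof
    assume "\<exists>t>0. decisive_q lam2 C1 C2 t = 0"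
    then show "decisive_q lam2 C1 C2 ts \<le> 0"
      using ts_min by metis
  next
    assume "decisive_q lam2 C1 C2 ts \<le> 0"
    then show "\<exists>t>0. decisive_q lam2 C1 C2 t = 0"
      by (rule decisive_q_root_if_nonpos[OF \<open>ts > 0\<close>])
  qed
  also have "\<dots> \<longleftrightarrow> C1 + C2 \<le> lam2 + C1 * ln r"
    using decisive_q_at_critical_point(2)[of lam2 C1 C2] assms(1) \<open>0 < r\<close>
    by (simp add: r_def ts_def divide_le_0_iff) linarith
  finally show ?thesis
    using True by (simp add: r_def)
qed

theorem mainTheorem5:
  fixes lam2 C1 C2 :: real
  assumes "lam2 < 0"
  shows "(\<exists>t>0. decisive_q lam2 C1 C2 t = 0) \<longleftrightarrow>
           (C1 < 0
            \<or> (C1 = 0 \<and> C2 < lam2)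
            \<or> (C1 > 0 \<and> C2 < 0 \<and> C1 + C2 < 0 \<and>
                lam2 + C1 * ln (- C1 / C2) \<ge> C1 + C2))"
proof (cases C1 "0 :: real" rule: linorder_cases)
  case less
  then show ?thesis
    using decisive_q_root_if_neg_slope[OF assms] by simp
next
  case equal
  then show ?thesis
    using decisive_q_root_iff_zero_slope[OF assms] by simp
next
  case greater
  then show ?thesis
    using decisive_q_root_iff_pos_slope[OF assms] by simp
qed

end
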